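(* Let $m\ge 2$, $1\le\ell<m$, and let $\mathcal{R}$ be the positional scoring rule with scoring function $\lambda(i)=\alpha_i$, where $\alpha_1\ge\alpha_2\ge\dots\ge\alpha_m=0$ and $\alpha_1>0$. Then the optimal truncated-ballot algorithm (described in the context) is, for $\ell$-truncated elections, an approximation algorithm for $\mathcal{R}$ with approximation ratio $$\frac{\sum_{i=1}^{\ell}\alpha_i}{m\,\alpha_{\ell+1}+\frac{\alpha_1-\alpha_{\ell+1}}{\alpha_1}\sum_{i=1}^{\ell}\alpha_i};$$ that is, for every election $E$ (with full rankings), if $w$ is the candidate returned by the algorithm on the $\ell$-truncation of $E$, then $\mathrm{sc}_\lambda(w)/\max_{c\in C}\mathrm{sc}_\lambda(c)$ is at least this quantity.
   Context: An election consists of a set $V$ of $n$ voters and a set $C$ of $m$ candidates; each voter $v$ has a strict linear order over $C$, and $\mathrm{pos}_v(c)$ is the position of $c$ (1 = top). The $\lambda$-score is $\mathrm{sc}_\lambda(c)=\sum_{v}\lambda(\mathrm{pos}_v(c))$. The $\ell$-truncation of $E$ reveals, for each voter, only her top $\ell$ candidates in order. Let $\mathrm{occ}(c)$ be the number of voters ranking $c$ among their top $\ell$, and $T(c)=\sum_{v:\,\mathrm{pos}_v(c)\le\ell}\alpha_{\mathrm{pos}_v(c)}$. Define $\mathrm{worst}(c)=T(c)+(n-\mathrm{occ}(c))\alpha_m$ (score when $c$ is placed last by every voter not ranking it in the top $\ell$) and $\mathrm{best}(c)=T(c)+(n-\mathrm{occ}(c))\alpha_{\ell+1}$ (score when $c$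 is placed at position $\ell+1$ by every such voter). Optimal truncated-ballot algorithm: let $a$ be a candidate with highest $\mathrm{worst}$ score, $b_1$ a candidate with highest $\mathrm{best}$ score and $b_2$ a candidate with the highest $\mathrm{best}$ score among $C\setminus\{b_1\}$; return $a$ if $\mathrm{worst}(a)/\mathrm{best}(b_1)\ge\mathrm{worst}(b_1)/\mathrm{best}(b_2)$, and $b_1$ otherwise. *)

theory Defs
  imports Complex_Main
begin

text \<open>An election: finite voter set V, finite candidate set C with card C = m,
  and for each voter v a strict linear order given by its position function
  P v :: candidate => position, a bijection from C onto {1..m} (1 = top).\<close>

definition is_election :: "'v set \<Rightarrow> 'c set \<Rightarrow> nat \<Rightarrow> ('v \<Rightarrow> 'c \<Rightarrow> nat) \<Rightarrow> bool" where
  "is_election V C m P \<longleftrightarrow> finite V \<and> finite C \<and> card C = m \<and>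
     (\<forall>v\<in>V. bij_betw (P v) C {1..m})"

definition sc :: "'v set \<Rightarrow> ('v \<Rightarrow> 'c \<Rightarrow> nat) \<Rightarrow> (nat \<Rightarrow> real) \<Rightarrow> 'c \<Rightarrow> real" where
  "sc V P \<alpha> c = (\<Sum>v\<in>V. \<alpha> (P v c))"

text \<open>Quantities visible in the l-truncation.\<close>
definition occ :: "'v set \<Rightarrow> ('v \<Rightarrow> 'c \<Rightarrow> nat) \<Rightarrow> nat \<Rightarrow> 'c \<Rightarrow> nat" where
  "occ V P l c = card {v\<in>V. P v c \<le> l}"

definition Tsc :: "'v set \<Rightarrow> ('v \<Rightarrow> 'c \<Rightarrow> nat) \<Rightarrow> (nat \<Rightarrow> real) \<Rightarrow> nat \<Rightarrow> 'c \<Rightarrow> real" where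
  "Tsc V P \<alpha> l c = (\<Sum>v\<in>{v\<in>V. P v c \<le> l}. \<alpha> (P v c))"

definition worst :: "'v set \<Rightarrow> ('v \<Rightarrow> 'c \<Rightarrow> nat) \<Rightarrow> (nat \<Rightarrow> real) \<Rightarrow> nat \<Rightarrow> nat \<Rightarrow> 'c \<Rightarrow> real" where
  "worst V P \<alpha> m l c = Tsc V P \<alpha> l c + real (card V - occ V P l c) * \<alpha> m"

definition best :: "'v set \<Rightarrow> ('v \<Rightarrow> 'c \<Rightarrow> nat) \<Rightarrow> (nat \<Rightarrow> real) \<Rightarrow> nat \<Rightarrow> 'c \<Rightarrow> real" where
  "best V P \<alpha> l c = Tsc V P \<alpha> l c + real (card V - occ V P l c) * \<alpha> (l + 1)"

text \<open>w is a possible output of the optimal truncated-ballot algorithm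
  (for some admissible tie-breaking in the choice of a, b1, b2).\<close>
definition trunc_alg_output ::
  "'v set \<Rightarrow> 'c set \<Rightarrow> ('v \<Rightarrow> 'c \<Rightarrow> nat) \<Rightarrow> (nat \<Rightarrow> real) \<Rightarrow> nat \<Rightarrow> nat \<Rightarrow> 'c \<Rightarrow> bool" where
  "trunc_alg_output V C P \<alpha> m l w \<longleftrightarrow>
     (\<exists>a b1 b2.
        a \<in> C \<and> (\<forall>c\<in>C. worst V P \<alpha> m l c \<le> worst V P \<alpha> m l a) \<and>
        b1 \<in> C \<and> (\<forall>c\<in>C. best V P \<alpha> l c \<le> best V P \<alpha> l b1) \<and>
        b2 \<in> C - {b1} \<and> (\<forall>c\<in>C - {b1}. best V P \<alpha> l c \<le> best V P \<alpha> l b2) \<and>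
        w = (if worst V P \<alpha> m l a / best V P \<alpha> l b1 \<ge> worst V P \<alpha> m l b1 / best V P \<alpha> l b2
             then a else b1))"

end

theory Submission
  imports Defs
begin

text \<open>Since \<open>\<alpha> m = 0\<close>, worst is exactly the truncated score \<open>T\<close>, and every candidate's true
  score lies between \<open>T\<close> and best. The algorithm's choice guarantees the ratio
  \<open>T(a) / best(b\<^sub>1)\<close>, where \<open>a\<close> maximises \<open>T\<close>, because the optimal candidate's score is
  at most \<open>best(b\<^sub>1)\<close>, and at most \<open>best(b\<^sub>2)\<close> unless it is \<open>b\<^sub>1\<close> itself. It remains to bound
  that ratio: every voter's top \<open>l\<close> positions contribute \<open>S = \<alpha>\<^sub>1 + \<dots> + \<alpha>\<^sub>l\<close> to the
  truncated scores, so \<open>T(a) \<ge> n S / m\<close>; and since \<open>T(c) \<le> occ(c) \<alpha>\<^sub>1\<close>, we have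
  \<open>best(c) \<le> n \<alpha>\<^sub>l\<^sub>+\<^sub>1 + T(c) (\<alpha>\<^sub>1 - \<alpha>\<^sub>l\<^sub>+\<^sub>1) / \<alpha>\<^sub>1\<close>.\<close>

lemma ratio_choice_guarantee:
  fixes lo s hi :: "'c \<Rightarrow> real"
  assumes "finite C"
    and sandwich: "\<And>c. c \<in> C \<Longrightarrow> 0 \<le> lo c \<and> lo c \<le> s c \<and> s c \<le> hi c"
    and opt_pos: "0 < Max (s ` C)"
    and "a \<in> C" and "b1 \<in> C" and b1_max: "\<And>c. c \<in> C \<Longrightarrow> hi c \<le> hi b1"
    and "b2 \<in> C - {b1}" and b2_max: "\<And>c. c \<in> C - {b1} \<Longrightarrow> hi c \<le> hi b2"
    and w: "w = (if lo a / hi b1 \<ge> lo b1 / hi b2 then a else b1)"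
  shows "lo a / hi b1 \<le> s w / Max (s ` C)"
proof -
  define opt where "opt = Max (s ` C)"
  have "0 < opt" using opt_pos unfolding opt_def .
  have "opt \<in> s ` C" unfolding opt_def using \<open>finite C\<close> \<open>a \<in> C\<close> by (intro Max_in) auto
  then obtain x where "x \<in> C" and s_x: "s x = opt" by auto
  have s_le_opt: "s c \<le> opt" if "c \<in> C" for c
    unfolding opt_def using \<open>finite C\<close> that by simp
  have opt_le_b1: "opt \<le> hi b1" using s_x sandwich[OF \<open>x \<in> C\<close>] b1_max[OF \<open>x \<in> C\<close>] by simp
  have lo_a_le: "lo a / hi b1 \<le> lo a / opt"
    using \<open>0 < opt\<close> opt_le_b1 sandwich[OF \<open>a \<in> C\<close>] by (intro divide_left_mono) auto
  have lo_over_opt: "lo c / opt \<le> s c / opt" if "c \<in> C" for c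
    using sandwich[OF that] \<open>0 < opt\<close> by (intro divide_right_mono) auto
  have "lo a / hi b1 \<le> s w / opt"
  proof (cases "lo a / hi b1 \<ge> lo b1 / hi b2")
    case True
    then show ?thesis using w lo_a_le lo_over_opt[OF \<open>a \<in> C\<close>] by simp
  next
    case False
    then have "w = b1" and less: "lo a / hi b1 < lo b1 / hi b2" using w by auto
    show ?thesis
    proof (cases "x = b1")
      case True
      have "lo a / opt \<le> 1"
        using sandwich[OF \<open>a \<in> C\<close>] s_le_opt[OF \<open>a \<in> C\<close>] \<open>0 < opt\<close> by simp
      moreover have "s w / opt = 1" using True \<open>w = b1\<close> s_x \<open>0 < opt\<close> by simp
      ultimately show ?thesis using lo_a_le by linarith
    next
      case False
      then have "opt \<le> hi b2" using s_x sandwich[OF \<open>x \<in> C\<close>] b2_max \<open>x \<in> C\<close> by force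
      then have "lo b1 / hi b2 \<le> lo b1 / opt"
        using \<open>0 < opt\<close> sandwich[OF \<open>b1 \<in> C\<close>] by (intro divide_left_mono) auto
      then show ?thesis using less lo_over_opt[OF \<open>b1 \<in> C\<close>] \<open>w = b1\<close> by simp
    qed
  qed
  then show ?thesis unfolding opt_def .
qed

lemma truncation_ratio_bound:
  fixes A \<beta> S M B n :: real and m :: nat
  assumes "0 < A" "0 \<le> \<beta>" "\<beta> \<le> A" "A \<le> S" "0 < m" "0 < B"
    and avg: "n * S \<le> m * M" and best: "B \<le> n * \<beta> + M * (A - \<beta>) / A"
  shows "S / (m * \<beta> + (A - \<beta>) / A * S) \<le> M / B"
proof -
  define D where "D = m * \<beta> + (A - \<beta>) / A * S"
  have "0 \<le> (A - \<beta>) / A * S" using assms by simp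
  moreover have "\<beta> = 0 \<Longrightarrow> 0 < (A - \<beta>) / A * S" using assms by simp
  moreover have "\<beta> \<noteq> 0 \<Longrightarrow> 0 < m * \<beta>" using assms by simp
  ultimately have "0 < D" unfolding D_def using \<open>0 \<le> \<beta>\<close> by (cases "\<beta> = 0") auto
  have "S * B \<le> S * (n * \<beta> + M * (A - \<beta>) / A)"
    using best assms by (intro mult_left_mono) auto
  also have "\<dots> = (n * S) * \<beta> + M * ((A - \<beta>) / A * S)" by (simp add: algebra_simps)
  also have "\<dots> \<le> (m * M) * \<beta> + M * ((A - \<beta>) / A * S)"
    using avg \<open>0 \<le> \<beta>\<close> by (intro add_right_mono mult_right_mono)
  also have "\<dots> = M * D" unfolding D_def by (simp add: algebra_simps)
  finally show ?thesis using \<open>0 < D\<close> \<open>0 < B\<close> unfolding D_def[symmetric] by (simp add: divide_simps)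
qed

locale scoring_election =
  fixes V :: "'v set" and C :: "'c set" and m :: nat and P :: "'v \<Rightarrow> 'c \<Rightarrow> nat"
    and \<alpha> :: "nat \<Rightarrow> real"
  assumes election: "is_election V C m P"
    and antitone: "\<And>i j. 1 \<le> i \<Longrightarrow> i \<le> j \<Longrightarrow> j \<le> m \<Longrightarrow> \<alpha> j \<le> \<alpha> i"
    and last_zero: "\<alpha> m = 0"
begin

lemma finite_voters: "finite V"
  and finite_candidates: "finite C"
  and card_candidates: "card C = m"
  using election unfolding is_election_def by auto

lemma position_bij: "v \<in> V \<Longrightarrow> bij_betw (P v) C {1..m}"
  using election unfolding is_election_def by auto

lemma position_in_range: "v \<in> V \<Longrightarrow> c \<in> C \<Longrightarrow> 1 \<le> P v c \<and> P v c \<le> m"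
  using position_bij bij_betwE by fastforce

lemma alpha_nonneg: "1 \<le> i \<Longrightarrow> i \<le> m \<Longrightarrow> 0 \<le> \<alpha> i"
  using antitone[of i m] last_zero by simp

lemma alpha_first_le_sum: "1 \<le> l \<Longrightarrow> l \<le> m \<Longrightarrow> \<alpha> 1 \<le> (\<Sum>i=1..l. \<alpha> i)"
  using alpha_nonneg by (intro member_le_sum) auto

lemma worst_eq_Tsc: "worst V P \<alpha> m l c = Tsc V P \<alpha> l c"
  unfolding worst_def last_zero by simp

lemma sc_eq_Tsc_plus_rest:
  "sc V P \<alpha> c = Tsc V P \<alpha> l c + (\<Sum>v\<in>V - {v\<in>V. P v c \<le> l}. \<alpha> (P v c))"
  unfolding sc_def Tsc_def using finite_voters
  by (simp add: sum.subset_diff[of "{v\<in>V. P v c \<le> l}" V])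

lemma card_not_occ: "card (V - {v\<in>V. P v c \<le> l}) = card V - occ V P l c"
  unfolding occ_def using finite_voters by (subst card_Diff_subset) auto

lemma occ_le_card: "occ V P l c \<le> card V"
  unfolding occ_def using finite_voters by (intro card_mono) auto

lemma Tsc_nonneg: "c \<in> C \<Longrightarrow> 0 \<le> Tsc V P \<alpha> l c"
  unfolding Tsc_def using alpha_nonneg position_in_range by (intro sum_nonneg) auto

lemma Tsc_le_occ: "c \<in> C \<Longrightarrow> Tsc V P \<alpha> l c \<le> occ V P l c * \<alpha> 1"
  unfolding Tsc_def occ_def using antitone position_in_range by (intro sum_bounded_above) auto

lemma Tsc_le_sc: "c \<in> C \<Longrightarrow> Tsc V P \<alpha> l c \<le> sc V P \<alpha> c"
  unfolding sc_eq_Tsc_plus_rest[of _ l] using alpha_nonneg position_in_range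
  by (smt (verit) DiffD1 sum_nonneg)

lemma sc_le_best:
  assumes "c \<in> C" "l < m"
  shows "sc V P \<alpha> c \<le> best V P \<alpha> l c"
proof -
  have "(\<Sum>v\<in>V - {v\<in>V. P v c \<le> l}. \<alpha> (P v c))
      \<le> card (V - {v\<in>V. P v c \<le> l}) * \<alpha> (l + 1)"
    using antitone position_in_range[OF _ assms(1)] by (intro sum_bounded_above) auto
  then show ?thesis unfolding sc_eq_Tsc_plus_rest[of _ l] best_def card_not_occ by simp
qed

lemma sum_Tsc:
  assumes "l \<le> m"
  shows "(\<Sum>c\<in>C. Tsc V P \<alpha> l c) = card V * (\<Sum>i=1..l. \<alpha> i)"
proof -
  have voter: "(\<Sum>c\<in>C. if P v c \<le> l then \<alpha> (P v c) else 0) = (\<Sum>i=1..l. \<alpha> i)" if "v \<in> V" for v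
  proof -
    have "(\<Sum>c\<in>C. if P v c \<le> l then \<alpha> (P v c) else 0) = (\<Sum>i=1..m. if i \<le> l then \<alpha> i else 0)"
      using sum.reindex_bij_betw[OF position_bij[OF that], of "\<lambda>i. if i \<le> l then \<alpha> i else 0"]
      by simp
    also have "\<dots> = (\<Sum>i\<in>{i\<in>{1..m}. i \<le> l}. \<alpha> i)" by (simp add: sum.inter_filter[symmetric])
    also have "{i\<in>{1..m}. i \<le> l} = {1..l}" using assms by auto
    finally show ?thesis .
  qed
  have "(\<Sum>c\<in>C. Tsc V P \<alpha> l c) = (\<Sum>c\<in>C. \<Sum>v\<in>V. if P v c \<le> l then \<alpha> (P v c) else 0)"
    unfolding Tsc_def using finite_voters by (simp add: sum.inter_filter)
  also have "\<dots> = (\<Sum>v\<in>V. \<Sum>c\<in>C. if P v c \<le> l then \<alpha> (P v c) else 0)"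
    by (rule sum.swap)
  also have "\<dots> = card V * (\<Sum>i=1..l. \<alpha> i)" using voter by simp
  finally show ?thesis .
qed

lemma best_le_Tsc_bound:
  assumes "c \<in> C" "l < m" "0 < \<alpha> 1" "Tsc V P \<alpha> l c \<le> M"
  shows "best V P \<alpha> l c \<le> card V * \<alpha> (l + 1) + M * (\<alpha> 1 - \<alpha> (l + 1)) / \<alpha> 1"
proof -
  define T where "T = Tsc V P \<alpha> l c"
  have "T / \<alpha> 1 * \<alpha> (l + 1) \<le> occ V P l c * \<alpha> (l + 1)"
    using Tsc_le_occ[OF assms(1)] alpha_nonneg[of "l + 1"] assms
    by (intro mult_right_mono) (auto simp: T_def divide_le_eq)
  moreover have "best V P \<alpha> l c = T + card V * \<alpha> (l + 1) - occ V P l c * \<alpha> (l + 1)"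
    unfolding best_def T_def using occ_le_card by (simp add: of_nat_diff algebra_simps)
  ultimately have "best V P \<alpha> l c \<le> card V * \<alpha> (l + 1) + (T - T / \<alpha> 1 * \<alpha> (l + 1))"
    by linarith
  also have "T - T / \<alpha> 1 * \<alpha> (l + 1) = T * (\<alpha> 1 - \<alpha> (l + 1)) / \<alpha> 1"
    using assms(3) by (simp add: field_simps)
  finally have "best V P \<alpha> l c \<le> card V * \<alpha> (l + 1) + T * (\<alpha> 1 - \<alpha> (l + 1)) / \<alpha> 1" .
  moreover have "T * (\<alpha> 1 - \<alpha> (l + 1)) / \<alpha> 1 \<le> M * (\<alpha> 1 - \<alpha> (l + 1)) / \<alpha> 1"
    using assms antitone[of 1 "l + 1"] unfolding T_def
    by (intro divide_right_mono mult_right_mono) auto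
  ultimately show ?thesis by linarith
qed

lemma Max_sc_le_best:
  assumes "l < m" "b \<in> C" "\<And>c. c \<in> C \<Longrightarrow> best V P \<alpha> l c \<le> best V P \<alpha> l b"
  shows "Max (sc V P \<alpha> ` C) \<le> best V P \<alpha> l b"
  using sc_le_best assms finite_candidates by (intro Max.boundedI) (auto intro: order.trans)

lemma Max_sc_pos:
  assumes "V \<noteq> {}" "1 \<le> m" "0 < \<alpha> 1"
  shows "0 < Max (sc V P \<alpha> ` C)"
proof -
  obtain v where "v \<in> V" using assms(1) by auto
  then obtain t where "t \<in> C" and top: "P v t = 1"
    using bij_betw_imp_surj_on[OF position_bij] assms(2)
    by (metis atLeastAtMost_iff imageE order_refl)
  have "\<alpha> 1 \<le> sc V P \<alpha> t"
    unfolding sc_def using member_le_sum[OF \<open>v \<in> V\<close>, of "\<lambda>u. \<alpha> (P u t)"]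
      alpha_nonneg position_in_range[OF _ \<open>t \<in> C\<close>] finite_voters top by auto
  also have "\<dots> \<le> Max (sc V P \<alpha> ` C)" using finite_candidates \<open>t \<in> C\<close> by simp
  finally show ?thesis using assms(3) by simp
qed

end

theorem theorem4:
  fixes V :: "'v set" and C :: "'c set" and P :: "'v \<Rightarrow> 'c \<Rightarrow> nat"
    and \<alpha> :: "nat \<Rightarrow> real" and m l :: nat and w :: 'c
  assumes "m \<ge> 2" and "1 \<le> l" and "l < m"
    and "\<And>i j. 1 \<le> i \<Longrightarrow> i \<le> j \<Longrightarrow> j \<le> m \<Longrightarrow> \<alpha> j \<le> \<alpha> i"
    and "\<alpha> m = 0" and "\<alpha> 1 > 0"
    and "is_election V C m P" and "V \<noteq> {}"
    and "trunc_alg_output V C P \<alpha> m l w"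
  shows "(\<Sum>i=1..l. \<alpha> i) /
           (real m * \<alpha> (l + 1) + (\<alpha> 1 - \<alpha> (l + 1)) / \<alpha> 1 * (\<Sum>i=1..l. \<alpha> i))
         \<le> sc V P \<alpha> w / Max (sc V P \<alpha> ` C)"
proof -
  interpret scoring_election V C m P \<alpha> using assms by unfold_locales
  let ?T = "Tsc V P \<alpha> l" and ?best = "best V P \<alpha> l"
  obtain a b1 b2 where "a \<in> C" and a_max: "\<forall>c\<in>C. ?T c \<le> ?T a"
    and "b1 \<in> C" and b1_max: "\<forall>c\<in>C. ?best c \<le> ?best b1"
    and "b2 \<in> C - {b1}" and b2_max: "\<forall>c\<in>C - {b1}. ?best c \<le> ?best b2"
    and "w = (if ?T a / ?best b1 \<ge> ?T b1 / ?best b2 then a else b1)"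
    using assms(9) unfolding trunc_alg_output_def worst_eq_Tsc by blast
  have opt_pos: "0 < Max (sc V P \<alpha> ` C)" using Max_sc_pos assms by simp
  have guarantee: "?T a / ?best b1 \<le> sc V P \<alpha> w / Max (sc V P \<alpha> ` C)"
  proof (rule ratio_choice_guarantee[OF finite_candidates _ opt_pos \<open>a \<in> C\<close> \<open>b1 \<in> C\<close> _
        \<open>b2 \<in> C - {b1}\<close>])
    show "0 \<le> ?T c \<and> ?T c \<le> sc V P \<alpha> c \<and> sc V P \<alpha> c \<le> ?best c" if "c \<in> C" for c
      using Tsc_nonneg Tsc_le_sc sc_le_best that assms(3) by blast
  qed (use b1_max b2_max \<open>w = _\<close> in auto)
  have avg: "card V * (\<Sum>i=1..l. \<alpha> i) \<le> m * ?T a"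
    using sum_Tsc[of l] sum_bounded_above[of C ?T "?T a"] a_max card_candidates assms(3) by simp
  have best_bound: "?best b1 \<le> card V * \<alpha> (l + 1) + ?T a * (\<alpha> 1 - \<alpha> (l + 1)) / \<alpha> 1"
    using best_le_Tsc_bound[OF \<open>b1 \<in> C\<close> assms(3,6)] a_max \<open>b1 \<in> C\<close> by simp
  have "Max (sc V P \<alpha> ` C) \<le> ?best b1" using Max_sc_le_best[OF assms(3) \<open>b1 \<in> C\<close>] b1_max by simp
  then have "0 < ?best b1" using opt_pos by linarith
  then have "(\<Sum>i=1..l. \<alpha> i) / (m * \<alpha> (l + 1) + (\<alpha> 1 - \<alpha> (l + 1)) / \<alpha> 1 * (\<Sum>i=1..l. \<alpha> i))
      \<le> ?T a / ?best b1"
    using alpha_nonneg[of "l + 1"] antitone[of 1 "l + 1"] alpha_first_le_sum[of l] assms(1-3,6)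
    by (intro truncation_ratio_bound[OF _ _ _ _ _ _ avg best_bound]) auto
  then show ?thesis using guarantee by linarith
qed

end
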